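(* Let $(B,\lfloor\cdot,\cdot\rfloor)$ be an SSD space with quadratic form $q$ and let $A\subset B$ be $q$-positive. Then: (1) $A\subset \mathcal{P}_q(\Phi_A^{@})\subset G_{\Phi_A}\subset A^{\pi}\cap \operatorname{conv}^w A$; (2) if $A$ is convex and $w(B,B)$-closed, then $A=G_{\Phi_A}$; (3) if $A$ is maximally $q$-positive, then $A=G_{\Phi_A}$.
   Context: An SSD space is a pair $(B,\lfloor\cdot,\cdot\rfloor)$ with $B$ a nonzero real vector space and $\lfloor\cdot,\cdot\rfloor$ a symmetric bilinear form; $q(b)=\frac12\lfloor b,b\rfloor$. $w(B,B)$ is the (possibly non-Hausdorff) weak topology on $B$, the coarsest topology making all maps $b\mapsto\lfloor b,c\rfloor$ ($c\in B$) continuous; $\operatorname{conv}^w A$ denotes the $w(B,B)$-closure of the convex hull of $A$. A nonempty $A\subset B$ is $q$-positive if $q(b-c)\ge0$ for all $b,c\in A$; maximally $q$-positive if $q$-positive and not properly contained in another $q$-positive set. $A^{\pi}:=\{b\in B: q(b-a)\ge0\ \forall a\in A\}$. $\Phi_A(x)=\sup_{a\in A}\{\lfloor x,a\rfloor-q(a)\}$. For proper convex $f:B\to\mathbb{R}\cup\{+\infty\}$, $f^{@}(b)=\sup_{c\in B}\{\lfloor c,b\rfloor-f(c)\}$, $\mathcal{P}_q(f)=\{b\in B: f(b)=q(b)\}$, and $G_f=\{b\in B: f(b)+f^{@}(b)=\lfloor b,b\rfloor\}$. *)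

theory Defs
  imports "HOL-Analysis.Analysis"
begin

definition SSD_space :: "('b::real_vector \<Rightarrow> 'b \<Rightarrow> real) \<Rightarrow> bool" where
  "SSD_space bf \<longleftrightarrow> (\<exists>x::'b. x \<noteq> 0) \<and> bilinear bf \<and> (\<forall>b c. bf b c = bf c b)"

definition qf :: "('b \<Rightarrow> 'b \<Rightarrow> real) \<Rightarrow> 'b \<Rightarrow> real" where
  "qf bf b = bf b b / 2"

definition weak_top :: "('b \<Rightarrow> 'b \<Rightarrow> real) \<Rightarrow> 'b topology" where
  "weak_top bf = topology_generated_by {{b. bf b c \<in> U} | c U. open U}"

definition conv_w :: "('b::real_vector \<Rightarrow> 'b \<Rightarrow> real) \<Rightarrow> 'b set \<Rightarrow> 'b set" where
  "conv_w bf A = (weak_top bf) closure_of (convex hull A)"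

definition q_positive :: "('b::real_vector \<Rightarrow> 'b \<Rightarrow> real) \<Rightarrow> 'b set \<Rightarrow> bool" where
  "q_positive bf A \<longleftrightarrow> A \<noteq> {} \<and> (\<forall>b\<in>A. \<forall>c\<in>A. qf bf (b - c) \<ge> 0)"

definition max_q_positive :: "('b::real_vector \<Rightarrow> 'b \<Rightarrow> real) \<Rightarrow> 'b set \<Rightarrow> bool" where
  "max_q_positive bf A \<longleftrightarrow> q_positive bf A \<and> (\<forall>A'. q_positive bf A' \<and> A \<subseteq> A' \<longrightarrow> A' = A)"

definition pi_set :: "('b::real_vector \<Rightarrow> 'b \<Rightarrow> real) \<Rightarrow> 'b set \<Rightarrow> 'b set" where
  "pi_set bf A = {b. \<forall>a\<in>A. qf bf (b - a) \<ge> 0}"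

definition Phi :: "('b \<Rightarrow> 'b \<Rightarrow> real) \<Rightarrow> 'b set \<Rightarrow> 'b \<Rightarrow> ereal" where
  "Phi bf A x = (SUP a\<in>A. ereal (bf x a - qf bf a))"

definition conj_at :: "('b \<Rightarrow> 'b \<Rightarrow> real) \<Rightarrow> ('b \<Rightarrow> ereal) \<Rightarrow> 'b \<Rightarrow> ereal" where
  "conj_at bf f b = (SUP c. ereal (bf c b) - f c)"

definition P_q :: "('b \<Rightarrow> 'b \<Rightarrow> real) \<Rightarrow> ('b \<Rightarrow> ereal) \<Rightarrow> 'b set" where
  "P_q bf f = {b. f b = ereal (qf bf b)}"

definition G_set :: "('b \<Rightarrow> 'b \<Rightarrow> real) \<Rightarrow> ('b \<Rightarrow> ereal) \<Rightarrow> 'b set" where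
  "G_set bf f = {b. f b + conj_at bf f b = ereal (bf b b)}"

end

theory Submission
  imports Defs
begin

text \<open>
  The heart of the matter is that \<open>\<Phi>\<^sub>A\<^sup>@ \<ge> q\<close> on all of \<open>B\<close>. If
  \<open>\<Phi>\<^sub>A\<^sup>@(b) < q(b) - \<epsilon>\<close>, consider the convex hull of the lifted points
  \<open>(a - b, q(a) - q(b))\<close>, \<open>a \<in> A\<close>, made upward closed in the real coordinate. No
  affine functional strictly separates \<open>(0, -\<epsilon>)\<close> from this set (testing \<open>\<Phi>\<^sub>A\<close>
  at the corresponding vector contradicts the assumption), so by finite-dimensional separation
  \<open>(0, -\<epsilon>)\<close> is approximated in any finitely many coordinates. But the symmetric biaffine
  pairing \<open>t + u - \<lfloor>x, b\<rfloor> - \<lfloor>y, b\<rfloor> - \<lfloor>x, y\<rfloor>\<close> equals \<open>q(a - a')\<close> on lifted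
  points, hence is nonnegative on the hull, while two successive approximations of
  \<open>(0, -\<epsilon>)\<close> make it close to \<open>-2\<epsilon>\<close>.

  With \<open>\<Phi>\<^sub>A\<^sup>@ \<ge> q\<close> the rest is convexity: \<open>\<Phi>\<^sub>A\<^sup>@ \<le> q\<close> on \<open>A\<close>; equality
  \<open>\<Phi>\<^sub>A\<^sup>@(b) = q(b)\<close> at the midpoint of \<open>a\<close> and \<open>b\<close> forces \<open>q(b - a) \<ge> 0\<close>; on
  \<open>G\<^sub>\<Phi>\<^sub>A\<close> the Fenchel--Young equality gives \<open>\<Phi>\<^sub>A \<le> q\<close>, i.e. \<open>A\<^sup>\<pi>\<close>; and a point
  outside the weak closure of \<open>conv A\<close> is strictly separated from it by finitely many
  functionals \<open>\<lfloor>\<cdot>, c\<rfloor>\<close>, which makes \<open>\<Phi>\<^sub>A\<^sup>@\<close> infinite there.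
\<close>

section \<open>Convexity and separation in finitely many coordinates\<close>

lemma nonneg_slope_if_quadratic_ge:
  fixes s D :: real
  assumes "\<And>t. 0 < t \<Longrightarrow> t \<le> 1 \<Longrightarrow> 0 \<le> 2 * t * s + t\<^sup>2 * D"
  shows "0 \<le> s"
proof (rule ccontr)
  assume "\<not> 0 \<le> s"
  define t where "t = min 1 (- s / (\<bar>D\<bar> + 1))"
  have t: "0 < t" "t \<le> 1"
    using \<open>\<not> 0 \<le> s\<close> by (auto simp: t_def divide_neg_pos)
  have "t * D \<le> t * \<bar>D\<bar>"
    using t by (simp add: mult_left_mono)
  also have "\<dots> \<le> - s / (\<bar>D\<bar> + 1) * \<bar>D\<bar>"
    by (rule mult_right_mono) (simp_all add: t_def)
  also have "\<dots> < - s"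
    using \<open>\<not> 0 \<le> s\<close> by (simp add: field_simps)
  finally have "t * D < - s" .
  have "0 \<le> t * (2 * s + t * D)"
    using assms[OF t] by (simp add: power2_eq_square algebra_simps)
  then have "0 \<le> 2 * s + t * D"
    using t by (simp add: zero_le_mult_iff)
  with \<open>t * D < - s\<close> \<open>\<not> 0 \<le> s\<close> show False by linarith
qed

lemma Cauchy_if_square_dist_le:
  fixes X :: "nat \<Rightarrow> real"
  assumes le: "\<And>m n. (X m - X n)\<^sup>2 \<le> e m + e n" and e: "e \<longlonglongrightarrow> 0"
  shows "Cauchy X"
proof (rule metric_CauchyI)
  fix r :: real assume "0 < r"
  then obtain M where M: "\<And>n. M \<le> n \<Longrightarrow> e n < r\<^sup>2 / 2"
    using order_tendstoD(2)[OF e, of "r\<^sup>2 / 2"] by (auto simp: eventually_sequentially)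
  have "dist (X m) (X n) < r" if "M \<le> m" "M \<le> n" for m n
  proof -
    have "(X m - X n)\<^sup>2 < r\<^sup>2"
      using le[of m n] M[OF that(1)] M[OF that(2)] by linarith
    then show ?thesis
      using \<open>0 < r\<close> power2_less_imp_less[of "\<bar>X m - X n\<bar>" r] by (simp add: dist_real_def)
  qed
  then show "\<exists>M. \<forall>m\<ge>M. \<forall>n\<ge>M. dist (X m) (X n) < r" by blast
qed

lemma minimizing_sequence_Cauchy:
  fixes \<phi> :: "'i \<Rightarrow> 'v::real_vector \<Rightarrow> real"
  assumes "finite I" "convex S"
    and aff: "\<And>i x y t. i \<in> I \<Longrightarrow> \<phi> i ((1 - t) *\<^sub>R x + t *\<^sub>R y) = (1 - t) * \<phi> i x + t * \<phi> i y"
    and lower: "\<And>x. x \<in> S \<Longrightarrow> m \<le> (\<Sum>i\<in>I. (\<phi> i x)\<^sup>2)"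
    and X: "\<And>k. X k \<in> S" and upper: "\<And>k. (\<Sum>i\<in>I. (\<phi> i (X k))\<^sup>2) \<le> m + e k"
    and e: "e \<longlonglongrightarrow> 0" and "i \<in> I"
  shows "Cauchy (\<lambda>k. \<phi> i (X k))"
proof (rule Cauchy_if_square_dist_le[where e = "\<lambda>k. 2 * e k"])
  show "(\<lambda>k. 2 * e k) \<longlonglongrightarrow> 0"
    using tendsto_mult_right_zero[OF e, of 2] .
  fix k l
  define z where "z = (1 - 1/2) *\<^sub>R X k + (1/2::real) *\<^sub>R X l"
  have "z \<in> S"
    unfolding z_def by (rule convexD_alt[OF \<open>convex S\<close> X X]) auto
  have mid: "\<phi> j z = (\<phi> j (X k) + \<phi> j (X l)) / 2" if "j \<in> I" for j
    using aff[OF that, where x = "X k" and y = "X l" and t = "1/2"] by (simp add: z_def)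
  have "(\<phi> i (X k) - \<phi> i (X l))\<^sup>2 \<le> (\<Sum>j\<in>I. (\<phi> j (X k) - \<phi> j (X l))\<^sup>2)"
    by (rule member_le_sum) (use \<open>i \<in> I\<close> \<open>finite I\<close> in auto)
  also have "\<dots> = (\<Sum>j\<in>I. 2 * (\<phi> j (X k))\<^sup>2 + 2 * (\<phi> j (X l))\<^sup>2 - 4 * (\<phi> j z)\<^sup>2)"
    by (rule sum.cong) (simp_all add: mid power2_eq_square field_simps)
  also have "\<dots> = 2 * (\<Sum>j\<in>I. (\<phi> j (X k))\<^sup>2) + 2 * (\<Sum>j\<in>I. (\<phi> j (X l))\<^sup>2)
                   - 4 * (\<Sum>j\<in>I. (\<phi> j z)\<^sup>2)"
    by (simp add: sum_subtractf sum.distrib sum_distrib_left)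
  also have "\<dots> \<le> 2 * e k + 2 * e l"
    using upper[of k] upper[of l] lower[OF \<open>z \<in> S\<close>] by linarith
  finally show "(\<phi> i (X k) - \<phi> i (X l))\<^sup>2 \<le> 2 * e k + 2 * e l" .
qed

lemma convex_affine_image_min_norm_limit:
  fixes \<phi> :: "'i \<Rightarrow> 'v::real_vector \<Rightarrow> real"
  assumes "finite I" "convex S" "S \<noteq> {}"
    and aff: "\<And>i x y t. i \<in> I \<Longrightarrow> \<phi> i ((1 - t) *\<^sub>R x + t *\<^sub>R y) = (1 - t) * \<phi> i x + t * \<phi> i y"
  shows "\<exists>X L. (\<forall>k. X k \<in> S) \<and> (\<forall>i\<in>I. (\<lambda>k. \<phi> i (X k)) \<longlonglongrightarrow> L i)
                \<and> (\<Sum>i\<in>I. (L i)\<^sup>2) = (INF x\<in>S. \<Sum>i\<in>I. (\<phi> i x)\<^sup>2)"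
proof -
  define N where "N x = (\<Sum>i\<in>I. (\<phi> i x)\<^sup>2)" for x
  define m where "m = (INF x\<in>S. N x)"
  have bdd: "bdd_below (N ` S)"
    by (rule bdd_belowI2[of _ 0]) (simp add: N_def sum_nonneg)
  have lower: "m \<le> N x" if "x \<in> S" for x
    unfolding m_def using bdd that by (rule cINF_lower)
  have "\<exists>x\<in>S. N x < m + 1 / Suc k" for k
  proof -
    have "Inf (N ` S) < m + 1 / Suc k" by (simp add: m_def)
    then show ?thesis using cInf_less_iff[of "N ` S"] \<open>S \<noteq> {}\<close> bdd by auto
  qed
  then obtain X where X: "\<And>k. X k \<in> S" and XN: "\<And>k. N (X k) < m + 1 / Suc k"
    by metis
  have e: "(\<lambda>k. 1 / real (Suc k)) \<longlonglongrightarrow> 0"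
    using LIMSEQ_inverse_real_of_nat by (simp add: inverse_eq_divide)
  have "Cauchy (\<lambda>k. \<phi> i (X k))" if "i \<in> I" for i
    by (rule minimizing_sequence_Cauchy[where e = "\<lambda>k. 1 / Suc k" and m = m])
      (use assms lower XN X e that in \<open>auto simp: N_def less_imp_le\<close>)
  then obtain L where L: "\<And>i. i \<in> I \<Longrightarrow> (\<lambda>k. \<phi> i (X k)) \<longlonglongrightarrow> L i"
    unfolding Cauchy_convergent_iff convergent_def by metis
  have "(\<lambda>k. N (X k)) \<longlonglongrightarrow> (\<Sum>i\<in>I. (L i)\<^sup>2)"
    unfolding N_def by (intro tendsto_intros L)
  moreover have "(\<lambda>k. N (X k)) \<longlonglongrightarrow> m"
  proof (rule real_tendsto_sandwich[where f = "\<lambda>_. m" and h = "\<lambda>k. m + 1 / Suc k"])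
    show "\<forall>\<^sub>F k in sequentially. m \<le> N (X k)" using lower X by simp
    show "\<forall>\<^sub>F k in sequentially. N (X k) \<le> m + 1 / Suc k" using XN by (simp add: less_imp_le)
    show "(\<lambda>k. m + 1 / Suc k) \<longlonglongrightarrow> m" using tendsto_add[OF tendsto_const e] by simp
  qed simp
  ultimately have "(\<Sum>i\<in>I. (L i)\<^sup>2) = m" by (rule LIMSEQ_unique)
  with X L show ?thesis unfolding m_def N_def by blast
qed

lemma min_norm_limit_variational_ineq:
  fixes \<phi> :: "'i \<Rightarrow> 'v::real_vector \<Rightarrow> real"
  assumes "finite I" "convex S"
    and aff: "\<And>i x y t. i \<in> I \<Longrightarrow> \<phi> i ((1 - t) *\<^sub>R x + t *\<^sub>R y) = (1 - t) * \<phi> i x + t * \<phi> i y"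
    and X: "\<And>k. X k \<in> S" and L: "\<And>i. i \<in> I \<Longrightarrow> (\<lambda>k. \<phi> i (X k)) \<longlonglongrightarrow> L i"
    and min: "\<And>x. x \<in> S \<Longrightarrow> (\<Sum>i\<in>I. (L i)\<^sup>2) \<le> (\<Sum>i\<in>I. (\<phi> i x)\<^sup>2)"
    and "v \<in> S"
  shows "(\<Sum>i\<in>I. (L i)\<^sup>2) \<le> (\<Sum>i\<in>I. L i * \<phi> i v)"
proof -
  define d where "d i = \<phi> i v - L i" for i
  have "0 \<le> (\<Sum>i\<in>I. L i * d i)"
  proof (rule nonneg_slope_if_quadratic_ge[where D = "\<Sum>i\<in>I. (d i)\<^sup>2"])
    fix t :: real assume t: "0 < t" "t \<le> 1"
    have "(\<lambda>k. \<Sum>i\<in>I. (\<phi> i ((1 - t) *\<^sub>R X k + t *\<^sub>R v))\<^sup>2) \<longlonglongrightarrow> (\<Sum>i\<in>I. (L i + t * d i)\<^sup>2)"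
    proof -
      have "(\<lambda>k. \<Sum>i\<in>I. ((1 - t) * \<phi> i (X k) + t * \<phi> i v)\<^sup>2)
              \<longlonglongrightarrow> (\<Sum>i\<in>I. ((1 - t) * L i + t * \<phi> i v)\<^sup>2)"
        by (intro tendsto_intros L)
      moreover have "(\<Sum>i\<in>I. (\<phi> i ((1 - t) *\<^sub>R X k + t *\<^sub>R v))\<^sup>2)
                       = (\<Sum>i\<in>I. ((1 - t) * \<phi> i (X k) + t * \<phi> i v)\<^sup>2)" for k
        by (rule sum.cong) (simp_all add: aff)
      moreover have "(\<Sum>i\<in>I. ((1 - t) * L i + t * \<phi> i v)\<^sup>2) = (\<Sum>i\<in>I. (L i + t * d i)\<^sup>2)"
        by (simp add: d_def algebra_simps)
      ultimately show ?thesis by simp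
    qed
    moreover have "(\<Sum>i\<in>I. (L i)\<^sup>2) \<le> (\<Sum>i\<in>I. (\<phi> i ((1 - t) *\<^sub>R X k + t *\<^sub>R v))\<^sup>2)" for k
      using min convexD_alt[OF \<open>convex S\<close> X \<open>v \<in> S\<close>] t by simp
    ultimately have "(\<Sum>i\<in>I. (L i)\<^sup>2) \<le> (\<Sum>i\<in>I. (L i + t * d i)\<^sup>2)"
      by (intro LIMSEQ_le_const) auto
    also have "\<dots> = (\<Sum>i\<in>I. (L i)\<^sup>2) + 2 * t * (\<Sum>i\<in>I. L i * d i) + t\<^sup>2 * (\<Sum>i\<in>I. (d i)\<^sup>2)"
      by (simp add: power2_eq_square algebra_simps sum.distrib sum_distrib_left)
    finally show "0 \<le> 2 * t * (\<Sum>i\<in>I. L i * d i) + t\<^sup>2 * (\<Sum>i\<in>I. (d i)\<^sup>2)" by simp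
  qed
  also have "(\<Sum>i\<in>I. L i * d i) = (\<Sum>i\<in>I. L i * \<phi> i v) - (\<Sum>i\<in>I. (L i)\<^sup>2)"
    by (simp add: d_def power2_eq_square right_diff_distrib sum_subtractf)
  finally show ?thesis by simp
qed

text \<open>The separating coefficients are the minimum-norm point of the closure of the image of
  \<open>S\<close> in \<open>\<real>\<^sup>I\<close>, obtained as a limit of a minimizing sequence.\<close>

lemma convex_strict_separation_finite_affine:
  fixes \<phi> :: "'i \<Rightarrow> 'v::real_vector \<Rightarrow> real"
  assumes "finite I" "convex S" "S \<noteq> {}"
    and aff: "\<And>i x y t. i \<in> I \<Longrightarrow> \<phi> i ((1 - t) *\<^sub>R x + t *\<^sub>R y) = (1 - t) * \<phi> i x + t * \<phi> i y"
    and "0 < \<delta>" and away: "\<And>x. x \<in> S \<Longrightarrow> \<exists>i\<in>I. \<delta> \<le> \<bar>\<phi> i x\<bar>"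
  shows "\<exists>w m. 0 < m \<and> (\<forall>x\<in>S. m \<le> (\<Sum>i\<in>I. w i * \<phi> i x))"
proof -
  obtain X L where X: "\<And>k. X k \<in> S" and L: "\<And>i. i \<in> I \<Longrightarrow> (\<lambda>k. \<phi> i (X k)) \<longlonglongrightarrow> L i"
    and norm_L: "(\<Sum>i\<in>I. (L i)\<^sup>2) = (INF x\<in>S. \<Sum>i\<in>I. (\<phi> i x)\<^sup>2)"
    using convex_affine_image_min_norm_limit[where \<phi> = \<phi>, OF assms(1-3) aff] by blast
  have "\<delta>\<^sup>2 \<le> (\<Sum>i\<in>I. (\<phi> i x)\<^sup>2)" if x: "x \<in> S" for x
  proof -
    obtain i where "i \<in> I" "\<delta> \<le> \<bar>\<phi> i x\<bar>" using away[OF x] by blast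
    then have "\<delta>\<^sup>2 \<le> (\<phi> i x)\<^sup>2"
      using \<open>0 < \<delta>\<close> by (metis abs_le_square_iff abs_of_pos)
    also have "\<dots> \<le> (\<Sum>i\<in>I. (\<phi> i x)\<^sup>2)"
      by (rule member_le_sum) (use \<open>i \<in> I\<close> \<open>finite I\<close> in auto)
    finally show ?thesis .
  qed
  then have "\<delta>\<^sup>2 \<le> (\<Sum>i\<in>I. (L i)\<^sup>2)"
    unfolding norm_L using \<open>S \<noteq> {}\<close> by (intro cINF_greatest)
  moreover have "(\<Sum>i\<in>I. (L i)\<^sup>2) \<le> (\<Sum>i\<in>I. L i * \<phi> i v)" if "v \<in> S" for v
  proof (rule min_norm_limit_variational_ineq[where \<phi> = \<phi>, OF assms(1,2) aff X L _ that])
    show "(\<Sum>i\<in>I. (L i)\<^sup>2) \<le> (\<Sum>i\<in>I. (\<phi> i x)\<^sup>2)" if "x \<in> S" for x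
      unfolding norm_L by (rule cINF_lower[OF _ that]) (rule bdd_belowI2[of _ 0], simp add: sum_nonneg)
  qed
  ultimately show ?thesis
    using \<open>0 < \<delta>\<close> by (intro exI[of _ L] exI[of _ "\<Sum>i\<in>I. (L i)\<^sup>2"])
      (auto intro: less_le_trans[OF zero_less_power])
qed

lemma convex_hull_symmetric_biaffine_nonneg:
  fixes \<Psi> :: "'a::real_vector \<Rightarrow> 'a \<Rightarrow> real"
  assumes sym: "\<And>u v. \<Psi> u v = \<Psi> v u"
    and aff: "\<And>u u' v t. \<Psi> ((1 - t) *\<^sub>R u + t *\<^sub>R u') v = (1 - t) * \<Psi> u v + t * \<Psi> u' v"
    and nonneg: "\<And>u v. u \<in> P \<Longrightarrow> v \<in> P \<Longrightarrow> 0 \<le> \<Psi> u v"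
    and "u \<in> convex hull P" "v \<in> convex hull P"
  shows "0 \<le> \<Psi> u v"
proof -
  have convex_nonneg: "convex {u. 0 \<le> \<Psi> u v}" for v
    by (auto simp: convex_alt aff)
  have "convex hull P \<subseteq> {u. 0 \<le> \<Psi> u v}" if "v \<in> P" for v
    by (rule hull_minimal) (use nonneg that convex_nonneg in auto)
  then have "convex hull P \<subseteq> {v. 0 \<le> \<Psi> v u}"
    using \<open>u \<in> convex hull P\<close> sym by (intro hull_minimal convex_nonneg) auto
  with \<open>v \<in> convex hull P\<close> sym show ?thesis by auto
qed

lemma topspace_weak_top: "topspace (weak_top bf) = UNIV"
  unfolding weak_top_def topology_generated_by_topspace
  by (auto intro!: UnionI[of "{x. bf x c \<in> UNIV}" for c])

lemma weak_top_open_contains_box: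
  assumes "openin (weak_top bf) V" "b \<in> V"
  shows "\<exists>C \<delta>. finite C \<and> 0 < \<delta> \<and> {x. \<forall>c\<in>C. \<bar>bf x c - bf b c\<bar> < \<delta>} \<subseteq> V"
proof -
  have "generate_topology_on {{b. bf b c \<in> U} | c U. open U} V"
    using assms(1) unfolding weak_top_def openin_topology_generated_by_iff .
  then have "\<forall>b\<in>V. \<exists>C \<delta>. finite C \<and> 0 < \<delta> \<and> {x. \<forall>c\<in>C. \<bar>bf x c - bf b c\<bar> < \<delta>} \<subseteq> V"
  proof induction
    case (Int V1 V2)
    show ?case
    proof
      fix b assume "b \<in> V1 \<inter> V2"
      then obtain C1 \<delta>1 C2 \<delta>2 where
        "finite C1" "0 < \<delta>1" "{x. \<forall>c\<in>C1. \<bar>bf x c - bf b c\<bar> < \<delta>1} \<subseteq> V1"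
        "finite C2" "0 < \<delta>2" "{x. \<forall>c\<in>C2. \<bar>bf x c - bf b c\<bar> < \<delta>2} \<subseteq> V2"
        using Int.IH by (meson IntD1 IntD2)
      then show "\<exists>C \<delta>. finite C \<and> 0 < \<delta> \<and> {x. \<forall>c\<in>C. \<bar>bf x c - bf b c\<bar> < \<delta>} \<subseteq> V1 \<inter> V2"
        by (intro exI[of _ "C1 \<union> C2"] exI[of _ "min \<delta>1 \<delta>2"]) force
    qed
  next
    case (UN \<V>)
    then show ?case by (meson UnionE UnionI subsetI subset_iff)
  next
    case (Basis V)
    then obtain c U where V: "V = {b. bf b c \<in> U}" "open U" by blast
    show ?case
    proof
      fix b assume "b \<in> V"
      then obtain \<delta> where "0 < \<delta>" "\<And>y. dist y (bf b c) < \<delta> \<Longrightarrow> y \<in> U"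
        using V unfolding open_dist by blast
      then show "\<exists>C \<delta>. finite C \<and> 0 < \<delta> \<and> {x. \<forall>c\<in>C. \<bar>bf x c - bf b c\<bar> < \<delta>} \<subseteq> V"
        using V by (intro exI[of _ "{c}"] exI[of _ \<delta>]) (auto simp: dist_real_def)
    qed
  qed simp
  with assms(2) show ?thesis by blast
qed

locale symmetric_bilinear_form =
  fixes bf :: "'b::real_vector \<Rightarrow> 'b \<Rightarrow> real"
  assumes bilinear: "bilinear bf" and commute: "bf b c = bf c b"
begin

abbreviation q :: "'b \<Rightarrow> real" where "q \<equiv> qf bf"

lemmas bf_simps [simp] =
  bilinear_ladd[OF bilinear] bilinear_radd[OF bilinear]
  bilinear_lsub[OF bilinear] bilinear_rsub[OF bilinear]
  bilinear_lneg[OF bilinear] bilinear_rneg[OF bilinear]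
  bilinear_lzero[OF bilinear] bilinear_rzero[OF bilinear]
  bilinear_lmul[OF bilinear] bilinear_rmul[OF bilinear]

lemma bf_sum_right: "finite C \<Longrightarrow> bf x (\<Sum>c\<in>C. w c *\<^sub>R c) = (\<Sum>c\<in>C. w c * bf x c)"
  by (induction C rule: finite_induct) simp_all

lemma q_diff: "q (x - y) = q x - bf x y + q y"
  unfolding qf_def using commute[of y x] by (simp add: field_simps)

lemma q_diff_commute: "q (x - y) = q (y - x)"
  using q_diff[of x y] q_diff[of y x] commute[of x y] by simp

end

locale q_positive_set = symmetric_bilinear_form bf for bf :: "'b::real_vector \<Rightarrow> 'b \<Rightarrow> real" +
  fixes A :: "'b set"
  assumes q_positive: "q_positive bf A"
begin

abbreviation \<Phi> :: "'b \<Rightarrow> ereal" where "\<Phi> \<equiv> Phi bf A"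
abbreviation conj_Phi :: "'b \<Rightarrow> ereal" ("\<Phi>\<^sup>@") where "\<Phi>\<^sup>@ \<equiv> conj_at bf \<Phi>"

lemma A_nonempty: "A \<noteq> {}"
  using q_positive unfolding q_positive_def by simp

lemma q_diff_nonneg: "a \<in> A \<Longrightarrow> a' \<in> A \<Longrightarrow> 0 \<le> q (a - a')"
  using q_positive unfolding q_positive_def by simp

lemma Phi_ge: "a \<in> A \<Longrightarrow> ereal (bf x a - q a) \<le> \<Phi> x"
  unfolding Phi_def by (rule SUP_upper)

lemma Phi_neq_MInf: "\<Phi> x \<noteq> -\<infinity>"
  using A_nonempty Phi_ge[of _ x] by force

lemma Phi_le_q_iff: "\<Phi> b \<le> ereal (q b) \<longleftrightarrow> b \<in> pi_set bf A"
  unfolding Phi_def pi_set_def SUP_le_iff by (auto simp: q_diff)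

lemma conj_Phi_ge: "\<Phi> c \<le> ereal r \<Longrightarrow> ereal (bf c b - r) \<le> \<Phi>\<^sup>@ b"
proof -
  assume "\<Phi> c \<le> ereal r"
  then have "ereal (bf c b - r) \<le> ereal (bf c b) - \<Phi> c"
    using Phi_neq_MInf[of c] by (cases "\<Phi> c") auto
  also have "\<dots> \<le> \<Phi>\<^sup>@ b"
    unfolding conj_at_def by (rule SUP_upper) simp
  finally show ?thesis .
qed

lemma conj_Phi_le:
  assumes "\<And>c r. \<Phi> c = ereal r \<Longrightarrow> bf c x - r \<le> M"
  shows "\<Phi>\<^sup>@ x \<le> ereal M"
  unfolding conj_at_def
proof (rule SUP_least)
  fix c
  show "ereal (bf c x) - \<Phi> c \<le> ereal M"
    using assms Phi_neq_MInf[of c] by (cases "\<Phi> c") auto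
qed

lemma conj_Phi_le_q:
  assumes "a \<in> A"
  shows "\<Phi>\<^sup>@ a \<le> ereal (q a)"
proof (rule conj_Phi_le)
  fix c r assume "\<Phi> c = ereal r"
  then show "bf c a - r \<le> q a" using Phi_ge[OF assms, of c] by simp
qed

lemma conj_Phi_less_imp_ex:
  assumes "\<Phi>\<^sup>@ b < ereal r"
  shows "\<exists>a\<in>A. bf c b - r < bf c a - q a"
proof -
  have "ereal (bf c b) - \<Phi> c < ereal r"
    using assms unfolding conj_at_def by (meson SUP_upper UNIV_I le_less_trans)
  then have "ereal (bf c b - r) < \<Phi> c"
    using Phi_neq_MInf[of c] by (cases "\<Phi> c") auto
  then show ?thesis
    unfolding Phi_def less_SUP_iff by auto
qed

lemma conj_Phi_unbounded:
  assumes "0 < m" and sep: "\<And>a. a \<in> A \<Longrightarrow> m \<le> bf (a - b) e"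
  shows "\<Phi>\<^sup>@ b = \<infinity>"
proof (rule ccontr)
  assume "\<Phi>\<^sup>@ b \<noteq> \<infinity>"
  then obtain r where r: "\<Phi>\<^sup>@ b < ereal r"
    using less_PInf_Ex_of_nat by blast
  obtain a0 where "a0 \<in> A" using A_nonempty by blast
  define s where "s = \<bar>q a0 - bf a0 b + r\<bar> / m"
  have "0 \<le> s" and sm: "s * m = \<bar>q a0 - bf a0 b + r\<bar>"
    using \<open>0 < m\<close> by (simp_all add: s_def)
  obtain a where "a \<in> A" and a: "bf (a0 - s *\<^sub>R e) b - r < bf (a0 - s *\<^sub>R e) a - q a"
    using conj_Phi_less_imp_ex[OF r] by blast
  have "bf a0 a - q a \<le> q a0"
    using q_diff_nonneg[OF \<open>a \<in> A\<close> \<open>a0 \<in> A\<close>] q_diff[of a a0] commute[of a a0] by simp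
  moreover have "s * m \<le> s * bf (a - b) e"
    using sep[OF \<open>a \<in> A\<close>] \<open>0 \<le> s\<close> by (rule mult_left_mono)
  ultimately show False
    using a sm commute[of e a] commute[of e b] by (simp add: algebra_simps)
qed

section \<open>The inequality \<open>\<Phi>\<^sub>A\<^sup>@ \<ge> q\<close>\<close>

definition lifted_hull :: "'b \<Rightarrow> ('b \<times> real) set" where
  "lifted_hull b = {(x, t). \<exists>s \<le> t. (x, s) \<in> convex hull ((\<lambda>a. (a - b, q a - q b)) ` A)}"

lemma convex_lifted_hull: "convex (lifted_hull b)"
proof (rule convexI)
  fix p p' :: "'b \<times> real" and \<mu> \<nu> :: real
  assume "p \<in> lifted_hull b" "p' \<in> lifted_hull b" and \<mu>\<nu>: "0 \<le> \<mu>" "0 \<le> \<nu>" "\<mu> + \<nu> = 1"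
  then obtain x t s x' t' s' where p: "p = (x, t)" "p' = (x', t')" "s \<le> t" "s' \<le> t'"
    and hull: "(x, s) \<in> convex hull ((\<lambda>a. (a - b, q a - q b)) ` A)"
              "(x', s') \<in> convex hull ((\<lambda>a. (a - b, q a - q b)) ` A)"
    unfolding lifted_hull_def by blast
  have "\<mu> *\<^sub>R (x, s) + \<nu> *\<^sub>R (x', s') \<in> convex hull ((\<lambda>a. (a - b, q a - q b)) ` A)"
    using convexD[OF convex_convex_hull hull \<mu>\<nu>] .
  moreover have "\<mu> * s + \<nu> * s' \<le> \<mu> * t + \<nu> * t'"
    using p \<mu>\<nu> by (intro add_mono mult_left_mono) auto
  ultimately show "\<mu> *\<^sub>R p + \<nu> *\<^sub>R p' \<in> lifted_hull b"
    unfolding p lifted_hull_def by auto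
qed

lemma lift_mem_lifted_hull: "a \<in> A \<Longrightarrow> q a - q b \<le> t \<Longrightarrow> (a - b, t) \<in> lifted_hull b"
  unfolding lifted_hull_def by (auto intro!: hull_inc)

lemma lifted_hull_pairing:
  assumes "(x, t) \<in> lifted_hull b" "(y, u) \<in> lifted_hull b"
  shows "bf x y + bf x b + bf y b \<le> t + u"
proof -
  define \<Psi> where "\<Psi> p p' = snd p + snd p' - bf (fst p) b - bf (fst p') b - bf (fst p) (fst p')"
    for p p' :: "'b \<times> real"
  obtain s s' where "s \<le> t" "s' \<le> u"
    and hull: "(x, s) \<in> convex hull ((\<lambda>a. (a - b, q a - q b)) ` A)"
              "(y, s') \<in> convex hull ((\<lambda>a. (a - b, q a - q b)) ` A)"
    using assms unfolding lifted_hull_def by blast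
  have "0 \<le> \<Psi> (x, s) (y, s')"
  proof (rule convex_hull_symmetric_biaffine_nonneg[OF _ _ _ hull])
    show "\<Psi> p p' = \<Psi> p' p" for p p'
      using commute[of "fst p" "fst p'"] by (simp add: \<Psi>_def)
    show "\<Psi> ((1 - \<tau>) *\<^sub>R p + \<tau> *\<^sub>R p') p'' = (1 - \<tau>) * \<Psi> p p'' + \<tau> * \<Psi> p' p''" for p p' p'' \<tau>
      by (simp add: \<Psi>_def algebra_simps)
    show "0 \<le> \<Psi> p p'"
      if lifted: "p \<in> (\<lambda>a. (a - b, q a - q b)) ` A" "p' \<in> (\<lambda>a. (a - b, q a - q b)) ` A" for p p'
    proof -
      obtain a a' where "a \<in> A" "a' \<in> A" "p = (a - b, q a - q b)" "p' = (a' - b, q a' - q b)"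
        using lifted by blast
      moreover have "\<Psi> (a - b, q a - q b) (a' - b, q a' - q b) = q (a - a')"
        unfolding \<Psi>_def qf_def using commute[of b a] commute[of b a'] commute[of a' a]
        by (simp add: algebra_simps)
      ultimately show ?thesis using q_diff_nonneg by simp
    qed
  qed
  with \<open>s \<le> t\<close> \<open>s' \<le> u\<close> show ?thesis by (simp add: \<Psi>_def)
qed

text \<open>\<open>w \<ge> 0\<close> since the set is upward closed in \<open>t\<close>; \<open>w = 0\<close> would make \<open>\<Phi>\<^sub>A\<^sup>@ b\<close>
  infinite, and \<open>w > 0\<close> is refuted by testing \<open>\<Phi>\<^sub>A\<close> at \<open>-e / w\<close>.\<close>

lemma lifted_hull_not_separated:
  assumes conj: "\<Phi>\<^sup>@ b < ereal (q b - \<epsilon>)" and "0 < m"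
    and sep: "\<And>x t. (x, t) \<in> lifted_hull b \<Longrightarrow> m \<le> bf x e + w * (t + \<epsilon>)"
  shows False
proof -
  obtain a0 where "a0 \<in> A" using A_nonempty by blast
  have sep_A: "m \<le> bf (a - b) e + w * (q a - q b + \<epsilon>)" if "a \<in> A" for a
    using sep[OF lift_mem_lifted_hull[OF that order_refl]] .
  have "0 \<le> w"
  proof (rule ccontr)
    assume "\<not> 0 \<le> w"
    define Z where "Z = bf (a0 - b) e + w * (q a0 - q b + \<epsilon>)"
    define T where "T = (\<bar>Z\<bar> + m) / - w"
    have "0 \<le> T" using \<open>\<not> 0 \<le> w\<close> \<open>0 < m\<close> by (simp add: T_def divide_nonneg_neg)
    then have "m \<le> bf (a0 - b) e + w * (q a0 - q b + T + \<epsilon>)"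
      using sep[OF lift_mem_lifted_hull[OF \<open>a0 \<in> A\<close>]] by simp
    also have "\<dots> = Z + w * T"
      by (simp add: Z_def algebra_simps)
    also have "\<dots> = Z - \<bar>Z\<bar> - m"
      using \<open>\<not> 0 \<le> w\<close> by (simp add: T_def)
    finally show False using \<open>0 < m\<close> by linarith
  qed
  show False
  proof (cases "w = 0")
    case True
    then have "\<Phi>\<^sup>@ b = \<infinity>"
      using conj_Phi_unbounded[OF \<open>0 < m\<close>, of b e] sep_A by simp
    with conj show False by simp
  next
    case False
    with \<open>0 \<le> w\<close> have "0 < w" by simp
    define c where "c = - (1 / w) *\<^sub>R e"
    obtain a where "a \<in> A" and a: "bf c b - (q b - \<epsilon>) < bf c a - q a"
      using conj_Phi_less_imp_ex[OF conj] by blast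
    have "w * (bf c b - (q b - \<epsilon>)) < w * (bf c a - q a)"
      using a \<open>0 < w\<close> by simp
    then have "bf (a - b) e + w * (q a - q b + \<epsilon>) < 0"
      using \<open>0 < w\<close> commute[of e a] commute[of e b] by (simp add: c_def algebra_simps)
    with sep_A[OF \<open>a \<in> A\<close>] \<open>0 < m\<close> show False by linarith
  qed
qed

lemma lifted_hull_approaches:
  assumes conj: "\<Phi>\<^sup>@ b < ereal (q b - \<epsilon>)" and "0 < \<delta>"
  shows "\<exists>x t. (x, t) \<in> lifted_hull b \<and> \<bar>bf x f\<bar> < \<delta> \<and> \<bar>bf x g\<bar> < \<delta> \<and> \<bar>t + \<epsilon>\<bar> < \<delta>"
proof (rule ccontr)
  assume far: "\<not> ?thesis"
  define \<phi> where "\<phi> i p = (if i = 0 then bf (fst p) f else if i = 1 then bf (fst p) g else snd p + \<epsilon>)"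
    for i :: nat and p :: "'b \<times> real"
  obtain a0 where "a0 \<in> A" using A_nonempty by blast
  have "\<exists>w m. 0 < m \<and> (\<forall>p\<in>lifted_hull b. m \<le> (\<Sum>i\<in>{0, 1, 2}. w i * \<phi> i p))"
  proof (rule convex_strict_separation_finite_affine[OF _ convex_lifted_hull _ _ \<open>0 < \<delta>\<close>])
    show "lifted_hull b \<noteq> {}"
      using lift_mem_lifted_hull[OF \<open>a0 \<in> A\<close> order_refl] by blast
    show "\<phi> i ((1 - \<tau>) *\<^sub>R p + \<tau> *\<^sub>R p') = (1 - \<tau>) * \<phi> i p + \<tau> * \<phi> i p'" for i p p' \<tau>
      by (simp add: \<phi>_def algebra_simps)
    show "\<exists>i\<in>{0, 1, 2}. \<delta> \<le> \<bar>\<phi> i p\<bar>" if "p \<in> lifted_hull b" for p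
      using far that by (cases p) (force simp: \<phi>_def)
  qed simp
  then obtain w m where "0 < m" and sep: "\<And>p. p \<in> lifted_hull b \<Longrightarrow> m \<le> (\<Sum>i\<in>{0, 1, 2}. w i * \<phi> i p)"
    by blast
  show False
  proof (rule lifted_hull_not_separated[OF conj \<open>0 < m\<close>])
    fix x t assume "(x, t) \<in> lifted_hull b"
    from sep[OF this] show "m \<le> bf x (w 0 *\<^sub>R f + w 1 *\<^sub>R g) + w 2 * (t + \<epsilon>)"
      by (simp add: \<phi>_def)
  qed
qed

lemma conj_Phi_ge_q: "ereal (q b) \<le> \<Phi>\<^sup>@ b"
proof (rule ccontr)
  assume "\<not> ereal (q b) \<le> \<Phi>\<^sup>@ b"
  then obtain r where r: "\<Phi>\<^sup>@ b < ereal r" "r < q b"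
    using ereal_dense2 by (metis ereal_less_eq(3) not_le)
  define \<epsilon> where "\<epsilon> = q b - r"
  have conj: "\<Phi>\<^sup>@ b < ereal (q b - \<epsilon>)" and "0 < \<epsilon>"
    using r by (simp_all add: \<epsilon>_def)
  define \<delta> where "\<delta> = \<epsilon> / 3"
  have "0 < \<delta>" using \<open>0 < \<epsilon>\<close> by (simp add: \<delta>_def)
  obtain x t where xt: "(x, t) \<in> lifted_hull b" "\<bar>bf x b\<bar> < \<delta>" "\<bar>t + \<epsilon>\<bar> < \<delta>"
    using lifted_hull_approaches[OF conj \<open>0 < \<delta>\<close>, of b b] by blast
  obtain y u where yu: "(y, u) \<in> lifted_hull b" "\<bar>bf y b\<bar> < \<delta>" "\<bar>bf y x\<bar> < \<delta>" "\<bar>u + \<epsilon>\<bar> < \<delta>"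
    using lifted_hull_approaches[OF conj \<open>0 < \<delta>\<close>, of b x] by blast
  have "bf x y + bf x b + bf y b \<le> t + u"
    using lifted_hull_pairing[OF xt(1) yu(1)] .
  then show False
    using xt yu commute[of x y] unfolding \<delta>_def abs_less_iff by linarith
qed

section \<open>The chain of inclusions\<close>

lemma conj_Phi_eq_q_imp_pi:
  assumes "\<Phi>\<^sup>@ b = ereal (q b)"
  shows "b \<in> pi_set bf A"
  unfolding pi_set_def
proof (intro CollectI ballI)
  fix a assume "a \<in> A"
  define z where "z = (1/2) *\<^sub>R (a + b)"
  \<comment> \<open>\<open>q z = (q a + q b) / 2 - q (b - a) / 4\<close>, while \<open>\<Phi>\<^sup>@\<close> is convex and \<open>\<ge> q\<close>\<close>
  have "\<Phi>\<^sup>@ z \<le> ereal ((q a + q b) / 2)"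
  proof (rule conj_Phi_le)
    fix c r assume r: "\<Phi> c = ereal r"
    have "bf c a - r \<le> q a"
      using Phi_ge[OF \<open>a \<in> A\<close>, of c] r by simp
    moreover have "bf c b - r \<le> q b"
      using conj_Phi_ge[of c r b] r assms by simp
    moreover have "bf c z = (bf c a + bf c b) / 2"
      by (simp add: z_def)
    ultimately show "bf c z - r \<le> (q a + q b) / 2"
      by (simp add: add_divide_distrib)
  qed
  with conj_Phi_ge_q[of z] have "ereal (q z) \<le> ereal ((q a + q b) / 2)"
    by (rule order_trans)
  then have "q z \<le> (q a + q b) / 2"
    by simp
  then show "0 \<le> q (b - a)"
    unfolding z_def qf_def using commute[of a b] by (simp add: algebra_simps)
qed

lemma conj_Phi_finite_imp_conv_w:
  assumes "\<Phi>\<^sup>@ b \<noteq> \<infinity>"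
  shows "b \<in> conv_w bf A"
  unfolding conv_w_def in_closure_of topspace_weak_top
proof (intro conjI allI impI UNIV_I)
  fix V assume V: "b \<in> V \<and> openin (weak_top bf) V"
  then obtain C \<delta> where "finite C" "0 < \<delta>" and box: "{x. \<forall>c\<in>C. \<bar>bf x c - bf b c\<bar> < \<delta>} \<subseteq> V"
    using weak_top_open_contains_box[of bf V b] by blast
  show "\<exists>y. y \<in> convex hull A \<and> y \<in> V"
  proof (rule ccontr)
    assume "\<not> ?thesis"
    then have "x \<notin> {x. \<forall>c\<in>C. \<bar>bf x c - bf b c\<bar> < \<delta>}" if "x \<in> convex hull A" for x
      using that box by blast
    then have away: "\<exists>c\<in>C. \<delta> \<le> \<bar>bf (x - b) c\<bar>" if "x \<in> convex hull A" for x
      using that by (simp add: not_less)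
    have "\<exists>w m. 0 < m \<and> (\<forall>x\<in>convex hull A. m \<le> (\<Sum>c\<in>C. w c * bf (x - b) c))"
    proof (rule convex_strict_separation_finite_affine[where \<phi> = "\<lambda>c x. bf (x - b) c"])
      show "convex hull A \<noteq> {}" using A_nonempty by simp
      show "bf ((1 - t) *\<^sub>R x + t *\<^sub>R y - b) c = (1 - t) * bf (x - b) c + t * bf (y - b) c" for c x y t
        by (simp add: algebra_simps)
      show "\<exists>c\<in>C. \<delta> \<le> \<bar>bf (x - b) c\<bar>" if "x \<in> convex hull A" for x
        using away[OF that] .
    qed (simp_all add: \<open>finite C\<close> \<open>0 < \<delta>\<close>)
    then obtain w m where "0 < m" and sep: "\<And>x. x \<in> convex hull A \<Longrightarrow> m \<le> (\<Sum>c\<in>C. w c * bf (x - b) c)"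
      by blast
    have "m \<le> bf (a - b) (\<Sum>c\<in>C. w c *\<^sub>R c)" if "a \<in> A" for a
      using sep[OF hull_inc[OF that]] by (simp add: bf_sum_right[OF \<open>finite C\<close>])
    from conj_Phi_unbounded[OF \<open>0 < m\<close> this] assms show False by simp
  qed
qed

lemma A_subset_P_q: "A \<subseteq> P_q bf \<Phi>\<^sup>@"
  unfolding P_q_def using conj_Phi_le_q conj_Phi_ge_q by (auto intro: antisym)

lemma P_q_subset_G_set: "P_q bf \<Phi>\<^sup>@ \<subseteq> G_set bf \<Phi>"
proof
  fix b assume "b \<in> P_q bf \<Phi>\<^sup>@"
  then have conj: "\<Phi>\<^sup>@ b = ereal (q b)" unfolding P_q_def by simp
  then have "\<Phi> b \<le> ereal (q b)"
    using conj_Phi_eq_q_imp_pi Phi_le_q_iff by blast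
  then obtain r where r: "\<Phi> b = ereal r" "r \<le> q b"
    using Phi_neq_MInf by (cases "\<Phi> b") auto
  have "bf b b - r \<le> q b"
    using conj_Phi_ge[of b r b] r conj by simp
  with r have "r = q b" by (simp add: qf_def)
  then show "b \<in> G_set bf \<Phi>"
    unfolding G_set_def using r conj by (simp add: qf_def)
qed

lemma G_set_subset_pi_conv_w: "G_set bf \<Phi> \<subseteq> pi_set bf A \<inter> conv_w bf A"
proof
  fix b assume "b \<in> G_set bf \<Phi>"
  then have G: "\<Phi> b + \<Phi>\<^sup>@ b = ereal (bf b b)" unfolding G_set_def by simp
  obtain r where r: "\<Phi> b = ereal r"
    using Phi_neq_MInf G by (cases "\<Phi> b") auto
  obtain s where s: "\<Phi>\<^sup>@ b = ereal s"
    using conj_Phi_ge_q[of b] G r by (cases "\<Phi>\<^sup>@ b") auto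
  have "r \<le> q b"
    using G r s conj_Phi_ge_q[of b] by (simp add: qf_def)
  then have "b \<in> pi_set bf A"
    using Phi_le_q_iff[of b] r by simp
  moreover have "b \<in> conv_w bf A"
    using conj_Phi_finite_imp_conv_w s by simp
  ultimately show "b \<in> pi_set bf A \<inter> conv_w bf A" ..
qed

lemma G_set_eq_if_convex_weakly_closed:
  assumes "convex A" "closedin (weak_top bf) A"
  shows "A = G_set bf \<Phi>"
proof -
  have "conv_w bf A = A"
    unfolding conv_w_def by (metis assms convex_hull_eq closure_of_closedin)
  then show ?thesis
    using A_subset_P_q P_q_subset_G_set G_set_subset_pi_conv_w by blast
qed

lemma q_positive_insert: "b \<in> pi_set bf A \<Longrightarrow> q_positive bf (insert b A)"
  unfolding q_positive_def pi_set_def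
  using q_diff_nonneg q_diff_commute by (auto simp: qf_def)

lemma G_set_eq_if_max_q_positive:
  assumes "max_q_positive bf A"
  shows "A = G_set bf \<Phi>"
proof -
  have "G_set bf \<Phi> \<subseteq> A"
  proof
    fix b assume "b \<in> G_set bf \<Phi>"
    then have "q_positive bf (insert b A)"
      using G_set_subset_pi_conv_w q_positive_insert by blast
    then show "b \<in> A"
      using assms unfolding max_q_positive_def by blast
  qed
  then show ?thesis
    using A_subset_P_q P_q_subset_G_set by blast
qed

end

theorem mainTheorem7:
  fixes bf :: "'b::real_vector \<Rightarrow> 'b \<Rightarrow> real" and A :: "'b set"
  assumes "SSD_space bf" and "q_positive bf A"
  shows "(A \<subseteq> P_q bf (conj_at bf (Phi bf A))
       \<and> P_q bf (conj_at bf (Phi bf A)) \<subseteq> G_set bf (Phi bf A)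
       \<and> G_set bf (Phi bf A) \<subseteq> pi_set bf A \<inter> conv_w bf A)
       \<and> (convex A \<and> closedin (weak_top bf) A \<longrightarrow> A = G_set bf (Phi bf A))
       \<and> (max_q_positive bf A \<longrightarrow> A = G_set bf (Phi bf A))"
proof -
  interpret q_positive_set bf A
    using assms unfolding SSD_space_def by unfold_locales auto
  show ?thesis
    using A_subset_P_q P_q_subset_G_set G_set_subset_pi_conv_w
      G_set_eq_if_convex_weakly_closed G_set_eq_if_max_q_positive by blast
qed

end
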